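(* A ring $R$ is CSNC if and only if (1) every clean element of $R$ is strongly clean, and (2) $R$ is a UU-ring.
   Context: All rings are associative with identity $1$. For a ring $R$, $\mathrm{Id}(R)$, $U(R)$, $\mathrm{Nil}(R)$ denote the sets of idempotents, units and nilpotent elements. An element $a\in R$ is clean if $a=e+u$ for some $e\in\mathrm{Id}(R)$, $u\in U(R)$, and strongly clean if such $e,u$ can be chosen with $eu=ue$ (equivalently $ea=ae$). An element $a$ is strongly nil-clean if $a=e+q$ with $e\in \mathrm{Id}(R)$, $q\in\mathrm{Nil}(R)$ and $eq=qe$. A ring $R$ is called CSNC if every clean element of $R$ is strongly nil-clean. $R$ is a UU-ring if $U(R)=1+\mathrm{Nil}(R)$. *)

theory Defs
  imports Main
begin

definition idempotent_el :: "'a::ring_1 \<Rightarrow> bool" where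
  "idempotent_el e \<longleftrightarrow> e * e = e"

definition unit_el :: "'a::ring_1 \<Rightarrow> bool" where
  "unit_el u \<longleftrightarrow> (\<exists>v. u * v = 1 \<and> v * u = 1)"

definition nilpotent_el :: "'a::ring_1 \<Rightarrow> bool" where
  "nilpotent_el q \<longleftrightarrow> (\<exists>n::nat. q ^ n = 0)"

definition clean_el :: "'a::ring_1 \<Rightarrow> bool" where
  "clean_el a \<longleftrightarrow> (\<exists>e u. idempotent_el e \<and> unit_el u \<and> a = e + u)"

definition strongly_clean_el :: "'a::ring_1 \<Rightarrow> bool" where
  "strongly_clean_el a \<longleftrightarrow>
     (\<exists>e u. idempotent_el e \<and> unit_el u \<and> a = e + u \<and> e * u = u * e)"

definition strongly_nil_clean_el :: "'a::ring_1 \<Rightarrow> bool" where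
  "strongly_nil_clean_el a \<longleftrightarrow>
     (\<exists>e q. idempotent_el e \<and> nilpotent_el q \<and> a = e + q \<and> e * q = q * e)"

definition CSNC :: "'a::ring_1 itself \<Rightarrow> bool" where
  "CSNC _ \<longleftrightarrow> (\<forall>a::'a. clean_el a \<longrightarrow> strongly_nil_clean_el a)"

definition UU_ring :: "'a::ring_1 itself \<Rightarrow> bool" where
  "UU_ring _ \<longleftrightarrow> {u::'a. unit_el u} = {1 + q | q::'a. nilpotent_el q}"

end

theory Submission
  imports Defs
begin

text \<open>
  Everything rests on the swap \<open>e + x = (1 - e) + (x + 2e - 1)\<close>, in which \<open>1 - e\<close> is again
  idempotent and commutes with \<open>x + 2e - 1\<close> whenever \<open>e\<close> commutes with \<open>x\<close>.
  If \<open>x = q\<close> is nilpotent, then \<open>q + 2e - 1\<close> is a unit, because \<open>(2e - 1)\<^sup>2 = 1\<close> and a unit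
  plus a commuting nilpotent is a unit; so strongly nil-clean elements are strongly clean.
  Units are clean, and in a CSNC ring a unit \<open>u = e + q\<close> makes \<open>e = u - q\<close> a unit idempotent,
  i.e. \<open>e = 1\<close>: the ring is UU.
  Conversely, in a UU ring \<open>-1 = 1 + (-2)\<close> forces \<open>2\<close> to be nilpotent, so for a strongly
  clean \<open>e + u\<close> the element \<open>u + 2e\<close> is a unit, hence \<open>u + 2e - 1\<close> is nilpotent and the
  swap yields a strongly nil-clean decomposition.
\<close>

lemma power_mult_commuting:
  fixes a b :: "'a::ring_1"
  assumes "a * b = b * a"
  shows "(a * b) ^ n = a ^ n * b ^ n"
proof (induction n)
  case (Suc n)
  have "b * a ^ n = a ^ n * b"
    using power_commuting_commutes[OF assms] by simp
  then have "a * (b * a ^ n) * b ^ n = a * (a ^ n * b) * b ^ n"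
    by simp
  then show ?case
    using Suc by (simp add: mult.assoc)
qed simp

lemma nilpotent_el_uminus: "nilpotent_el (q::'a::ring_1) \<Longrightarrow> nilpotent_el (- q)"
  unfolding nilpotent_el_def by (metis mult_zero_right power_minus)

lemma nilpotent_el_mult_commuting:
  fixes a q :: "'a::ring_1"
  assumes "a * q = q * a" and "nilpotent_el q"
  shows "nilpotent_el (a * q)"
proof -
  obtain n where "q ^ n = 0"
    using assms(2) unfolding nilpotent_el_def by blast
  then have "(a * q) ^ n = 0"
    using power_mult_commuting[OF assms(1)] by simp
  then show ?thesis
    unfolding nilpotent_el_def by blast
qed

lemma one_minus_mult_geometric_sum:
  fixes x :: "'a::ring_1"
  shows "(1 - x) * (\<Sum>i<n. x ^ i) = 1 - x ^ n"
proof (induction n)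
  case (Suc n)
  have "(1 - x) * (\<Sum>i<Suc n. x ^ i) = (1 - x ^ n) + (1 - x) * x ^ n"
    using Suc by (simp add: distrib_left)
  also have "\<dots> = 1 - x ^ Suc n"
    by (simp add: algebra_simps power_Suc2)
  finally show ?case .
qed simp

lemma unit_el_one_minus_nilpotent:
  fixes x :: "'a::ring_1"
  assumes "nilpotent_el x"
  shows "unit_el (1 - x)"
proof -
  obtain n where "x ^ n = 0"
    using assms unfolding nilpotent_el_def by blast
  define s where "s = (\<Sum>i<n. x ^ i)"
  have left: "(1 - x) * s = 1"
    using one_minus_mult_geometric_sum[of x n] \<open>x ^ n = 0\<close> by (simp add: s_def)
  have "x * s = s * x"
    by (simp add: s_def sum_distrib_left sum_distrib_right power_commutes)
  then have "s * (1 - x) = (1 - x) * s"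
    by (simp add: algebra_simps)
  with left show ?thesis
    unfolding unit_el_def by auto
qed

lemma unit_el_one_plus_nilpotent: "nilpotent_el (q::'a::ring_1) \<Longrightarrow> unit_el (1 + q)"
  using unit_el_one_minus_nilpotent[of "- q"] nilpotent_el_uminus by fastforce

lemma inverse_commute:
  fixes u v x :: "'a::ring_1"
  assumes "u * v = 1" and "v * u = 1" and "u * x = x * u"
  shows "v * x = x * v"
proof -
  have "v * x = v * (x * u) * v"
    using assms(1) by (simp add: mult.assoc)
  also have "\<dots> = (v * u) * x * v"
    using assms(3) by (simp add: mult.assoc)
  finally show ?thesis
    using assms(2) by simp
qed

lemma unit_el_add_nilpotent_commuting:
  fixes u x :: "'a::ring_1"
  assumes "unit_el u" and "nilpotent_el x" and "u * x = x * u"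
  shows "unit_el (u + x)"
proof -
  obtain v where v: "u * v = 1" "v * u = 1"
    using assms(1) unfolding unit_el_def by blast
  have "nilpotent_el (v * x)"
    using nilpotent_el_mult_commuting inverse_commute[OF v assms(3)] assms(2) by blast
  then obtain w where w: "(1 + v * x) * w = 1" "w * (1 + v * x) = 1"
    using unit_el_one_plus_nilpotent unfolding unit_el_def by blast
  have factor: "u + x = u * (1 + v * x)"
    using v by (simp add: distrib_left mult.assoc[symmetric])
  have "(u + x) * (w * v) = 1"
    unfolding factor by (metis mult.assoc mult_1_right w(1) v(1))
  moreover have "(w * v) * (u + x) = 1"
    unfolding factor by (metis mult.assoc mult_1_left w(2) v(2))
  ultimately show ?thesis
    unfolding unit_el_def by blast
qed

lemma idempotent_unit_eq_one: "idempotent_el (e::'a::ring_1) \<Longrightarrow> unit_el e \<Longrightarrow> e = 1"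
  unfolding idempotent_el_def unit_el_def by (metis mult.assoc mult_1_right)

lemma idempotent_el_one_minus: "idempotent_el (e::'a::ring_1) \<Longrightarrow> idempotent_el (1 - e)"
  unfolding idempotent_el_def by (simp add: algebra_simps)

lemma unit_el_two_idempotent_minus_one:
  fixes e :: "'a::ring_1"
  assumes "idempotent_el e"
  shows "unit_el (2 * e - 1)"
proof -
  have "(2 * e - 1) * (2 * e - 1) = 1"
    using assms unfolding idempotent_el_def by (simp add: algebra_simps mult_2)
  then show ?thesis
    unfolding unit_el_def by blast
qed

lemma one_minus_commute_swap:
  fixes e x :: "'a::ring_1"
  assumes "e * x = x * e"
  shows "(1 - e) * (x + 2 * e - 1) = (x + 2 * e - 1) * (1 - e)"
  using assms by (simp add: algebra_simps mult_2)

lemma strongly_nil_clean_imp_strongly_clean: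
  fixes a :: "'a::ring_1"
  assumes "strongly_nil_clean_el a"
  shows "strongly_clean_el a"
proof -
  obtain e q where e: "idempotent_el e" and q: "nilpotent_el q"
    and a: "a = e + q" and eq: "e * q = q * e"
    using assms unfolding strongly_nil_clean_el_def by blast
  have "(2 * e - 1) * q = q * (2 * e - 1)"
    using eq by (simp add: algebra_simps mult_2)
  then have "unit_el (q + 2 * e - 1)"
    using unit_el_add_nilpotent_commuting[OF unit_el_two_idempotent_minus_one[OF e] q]
    by (simp add: algebra_simps)
  moreover have "a = (1 - e) + (q + 2 * e - 1)"
    using a by (simp add: mult_2)
  ultimately show ?thesis
    unfolding strongly_clean_el_def
    using idempotent_el_one_minus[OF e] one_minus_commute_swap[OF eq] by blast
qed

lemma clean_el_unit: "unit_el (u::'a::ring_1) \<Longrightarrow> clean_el u"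
  unfolding clean_el_def idempotent_el_def by force

lemma UU_ring_iff: "UU_ring TYPE('a::ring_1) \<longleftrightarrow> (\<forall>u::'a. unit_el u \<longrightarrow> nilpotent_el (u - 1))"
  unfolding UU_ring_def
  by (auto simp: set_eq_iff unit_el_one_plus_nilpotent intro: exI[of _ "_ - 1"])

lemma UU_ring_nilpotent_two:
  assumes "UU_ring TYPE('a::ring_1)"
  shows "nilpotent_el (2::'a)"
proof -
  have "unit_el (- 1 :: 'a)"
    unfolding unit_el_def by (rule exI[of _ "- 1"]) simp
  then have "nilpotent_el (- 1 - 1 :: 'a)"
    using assms unfolding UU_ring_iff by blast
  then show ?thesis
    using nilpotent_el_uminus[of "- 1 - 1 :: 'a"] by simp
qed

lemma UU_ring_strongly_clean_imp_strongly_nil_clean: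
  fixes a :: "'a::ring_1"
  assumes UU: "UU_ring TYPE('a)" and "strongly_clean_el a"
  shows "strongly_nil_clean_el a"
proof -
  obtain e u where e: "idempotent_el e" and u: "unit_el u"
    and a: "a = e + u" and eu: "e * u = u * e"
    using assms(2) unfolding strongly_clean_el_def by blast
  have "nilpotent_el (2 * e)"
    using nilpotent_el_mult_commuting[of e 2] UU_ring_nilpotent_two[OF UU]
    by (metis mult_of_nat_commute of_nat_numeral)
  moreover have "u * (2 * e) = (2 * e) * u"
    using eu by (simp add: algebra_simps mult_2)
  ultimately have "unit_el (u + 2 * e)"
    using unit_el_add_nilpotent_commuting u by blast
  then have "nilpotent_el (u + 2 * e - 1)"
    using UU unfolding UU_ring_iff by blast
  moreover have "a = (1 - e) + (u + 2 * e - 1)"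
    using a by (simp add: mult_2)
  ultimately show ?thesis
    unfolding strongly_nil_clean_el_def
    using idempotent_el_one_minus[OF e] one_minus_commute_swap[OF eu] by blast
qed

lemma CSNC_imp_UU_ring:
  assumes CSNC: "CSNC TYPE('a::ring_1)"
  shows "UU_ring TYPE('a)"
  unfolding UU_ring_iff
proof (intro allI impI)
  fix u :: 'a
  assume u: "unit_el u"
  then obtain e q where e: "idempotent_el e" and q: "nilpotent_el q"
    and ueq: "u = e + q" and eq: "e * q = q * e"
    using CSNC clean_el_unit unfolding CSNC_def strongly_nil_clean_el_def by blast
  have "u * (- q) = (- q) * u"
    using ueq eq by (simp add: algebra_simps)
  then have "unit_el e"
    using unit_el_add_nilpotent_commuting[OF u nilpotent_el_uminus[OF q]] ueq by simp
  then have "e = 1"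
    using idempotent_unit_eq_one e by blast
  then show "nilpotent_el (u - 1)"
    using ueq q by simp
qed

theorem theorem2p4:
  shows "CSNC TYPE('a::ring_1) \<longleftrightarrow>
           ((\<forall>a::'a. clean_el a \<longrightarrow> strongly_clean_el a) \<and> UU_ring TYPE('a))"
proof
  assume CSNC: "CSNC TYPE('a)"
  then have "\<forall>a::'a. clean_el a \<longrightarrow> strongly_clean_el a"
    unfolding CSNC_def using strongly_nil_clean_imp_strongly_clean by blast
  with CSNC_imp_UU_ring[OF CSNC]
  show "(\<forall>a::'a. clean_el a \<longrightarrow> strongly_clean_el a) \<and> UU_ring TYPE('a)"
    by blast
next
  assume "(\<forall>a::'a. clean_el a \<longrightarrow> strongly_clean_el a) \<and> UU_ring TYPE('a)"
  then show "CSNC TYPE('a)"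
    unfolding CSNC_def using UU_ring_strongly_clean_imp_strongly_nil_clean by blast
qed

end
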